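(* Let $\alpha\in\mathbb{N}_0$ and $N>0$. For every $n\in\mathbb{N}_0$ the Laguerre-type polynomial $L_n^{\alpha,N}$ satisfies, for $0\le x<\infty$, $$\Big\{\big[L_{2,x}^{\alpha}+n\big]+\frac{N}{(\alpha+2)!}\big[L_{2\alpha+4,x}^{\alpha}+(n)_{\alpha+2}\big]\Big\}L_n^{\alpha,N}(x)=0,$$ where for sufficiently smooth $y$, $$L_{2,x}^{\alpha}y(x)=e^x x^{-\alpha}D_x\big\{e^{-x}x^{\alpha+1}D_x y(x)\big\},\qquad L_{2\alpha+4,x}^{\alpha}y(x)=(-1)^{\alpha+1}e^x x\,D_x^{\alpha+2}\big\{e^{-x}D_x^{\alpha+2}[x^{\alpha+1}y(x)]\big\}.$$
   Context: $D_x^i$ denotes the $i$-fold derivative in $x$; $(a)_k=a(a+1)\cdots(a+k-1)$ is the Pochhammer symbol. For $\gamma>-1$, $L_n^{\gamma}(x)=\frac{(\gamma+1)_n}{n!}\,{}_1F_1(-n;\gamma+1;x)$ are the classical Laguerre polynomials. The Laguerre-type polynomials are $L_n^{\alpha,N}(x)=L_n^{\alpha}(x)+N\,T_n^{\alpha}(x)$, where $T_0^{\alpha}=0$ and for $n\ge1$, $T_n^{\alpha}(x)=-t_n^{\alpha}\,x\,L_{n-1}^{\alpha+2}(x)$ with $t_n^{\alpha}=(\alpha+2)_{n-1}/n!$. Note $L_{2,x}^{\alpha}=xD_x^2+(\alpha+1-x)D_x$. *)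

theory Defs
  imports "HOL-Analysis.Analysis"
begin

(* Classical Laguerre polynomial L_n^gamma(x) = (gamma+1)_n/n! * 1F1(-n; gamma+1; x),
   the terminating hypergeometric series written out. *)
definition laguerre :: "nat \<Rightarrow> real \<Rightarrow> real \<Rightarrow> real" where
  "laguerre n \<gamma> x = pochhammer (\<gamma> + 1) n / fact n *
     (\<Sum>k=0..n. pochhammer (- real n) k / (pochhammer (\<gamma> + 1) k * fact k) * x ^ k)"

definition t_coef :: "nat \<Rightarrow> nat \<Rightarrow> real" where
  "t_coef n \<alpha> = pochhammer (real \<alpha> + 2) (n - 1) / fact n"

definition T_lag :: "nat \<Rightarrow> nat \<Rightarrow> real \<Rightarrow> real" where
  "T_lag n \<alpha> x = (if n = 0 then 0
      else - t_coef n \<alpha> * x * laguerre (n - 1) (real \<alpha> + 2) x)"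

definition laguerre_type :: "nat \<Rightarrow> nat \<Rightarrow> real \<Rightarrow> real \<Rightarrow> real" where
  "laguerre_type n \<alpha> N x = laguerre n (real \<alpha>) x + N * T_lag n \<alpha> x"

(* L_{2,x}^alpha = x D^2 + (alpha+1-x) D  (expanded form of e^x x^{-alpha} D{e^{-x} x^{alpha+1} D}) *)
definition L2op :: "nat \<Rightarrow> (real \<Rightarrow> real) \<Rightarrow> real \<Rightarrow> real" where
  "L2op \<alpha> y x = x * (deriv ^^ 2) y x + (real \<alpha> + 1 - x) * deriv y x"

definition L2a4op :: "nat \<Rightarrow> (real \<Rightarrow> real) \<Rightarrow> real \<Rightarrow> real" where
  "L2a4op \<alpha> y x = (-1) ^ (\<alpha> + 1) * exp x * x *
     (deriv ^^ (\<alpha> + 2)) (\<lambda>t. exp (- t) * (deriv ^^ (\<alpha> + 2)) (\<lambda>s. s ^ (\<alpha> + 1) * y s) t) x"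

end

theory Submission
  imports Defs "HOL-Computational_Algebra.Polynomial"
begin

text \<open>
  All functions involved are polynomials, so the identity is proved for real polynomials,
  where conjugation by the weight e^(-x) turns D into D - 1. Write L = L_n^\<alpha> and T = T_n^\<alpha>.
  Collecting powers of N in the operator applied to L + N T leaves three identities:
  the Laguerre equation for L; the eigenrelation L_(2\<alpha>+4) T = -(n)_(\<alpha>+2) T, which follows
  from the Rodrigues-type formula D^m (x^m L_j^m) = (j+1)_m L_j^0 together with
  (D - 1) L_j^g = -L_j^(g+1); and a cross identity between T and L, in which both sides
  reduce to multiples of L_(n-1)^(\<alpha>+2) by the Laguerre equation and the contiguous
  relations among L_n^g, L_n^(g+1) and L_(n+1)^g.
\<close>

lemma Suc_mult_sign_divide_fact:
  "(real k + 1) * ((-1) ^ Suc k / fact (Suc k)) = - ((-1) ^ k / fact k :: real)"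
  by (simp add: divide_simps)

lemma fact_add_eq_pochhammer: "fact (m + k) = fact m * pochhammer (of_nat m + 1) k"
  using pochhammer_product'[of 1 m k] by (simp add: pochhammer_fact add.commute)

lemma pochhammer_add_2: "pochhammer z (m + 2) = z * pochhammer (z + 1) m * (z + of_nat m + 1)"
proof -
  have "pochhammer z (Suc (Suc m)) = z * pochhammer (z + 1) (Suc m)"
    by (rule pochhammer_rec)
  also have "\<dots> = z * (pochhammer (z + 1) m * (z + 1 + of_nat m))"
    by (simp only: pochhammer_Suc)
  finally show ?thesis
    by (simp add: ac_simps)
qed

lemma funpow_additive:
  fixes f :: "'a::plus \<Rightarrow> 'a"
  assumes "\<And>p q. f (p + q) = f p + f q"
  shows "(f ^^ k) (p + q) = (f ^^ k) p + (f ^^ k) q"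
  by (induction k) (simp_all add: assms)

lemma funpow_smult:
  fixes f :: "'a::comm_semiring_0 poly \<Rightarrow> 'a poly"
  assumes "\<And>c p. f (smult c p) = smult c (f p)"
  shows "(f ^^ k) (smult c p) = smult c ((f ^^ k) p)"
  by (induction k) (simp_all add: assms)

lemma funpow_pCons_zero:
  fixes D :: "real poly \<Rightarrow> real poly"
  assumes D_pCons: "\<And>p. D (pCons 0 p) = pCons 0 (D p) + p"
    and D_add: "\<And>p q. D (p + q) = D p + D q"
    and D_smult: "\<And>c p. D (smult c p) = smult c (D p)"
  shows "(D ^^ Suc k) (pCons 0 p) = pCons 0 ((D ^^ Suc k) p) + smult (real (Suc k)) ((D ^^ k) p)"
proof (induction k)
  case (Suc k)
  have "(D ^^ Suc (Suc k)) (pCons 0 p) = D (pCons 0 ((D ^^ Suc k) p)) + smult (real (Suc k)) ((D ^^ Suc k) p)"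
    using Suc by (simp add: D_add D_smult)
  moreover have "smult (real (Suc (Suc k))) r = r + smult (real (Suc k)) r" for r
    by (simp only: of_nat_Suc[of "Suc k"] smult_add_left smult_1_left)
  ultimately show ?case
    by (simp add: D_pCons add_ac)
qed (simp add: D_pCons)

lemma pderiv_pCons_zero: "pderiv (pCons 0 p) = pCons 0 (pderiv p) + p"
  by (simp add: pderiv_pCons add.commute)

lemma higher_pderiv_pCons_zero:
  "(pderiv ^^ Suc k) (pCons 0 p) = pCons 0 ((pderiv ^^ Suc k) p) + smult (real (Suc k)) ((pderiv ^^ k) p)"
  by (rule funpow_pCons_zero) (simp_all add: pderiv_pCons_zero pderiv_add pderiv_smult)

lemma pderiv_monom_Suc_mult:
  "pderiv (monom 1 (Suc m) * p) = monom 1 m * (smult (real m + 1) p + pCons 0 (pderiv p))"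
  by (simp add: poly_eq_poly_eq_iff[symmetric] fun_eq_iff pderiv_mult pderiv_monom poly_monom algebra_simps)

lemma deriv_poly: "deriv (poly p) = poly (pderiv p)" for p :: "real poly"
  by (rule ext, rule DERIV_imp_deriv) (rule poly_DERIV)

lemma higher_deriv_poly: "(deriv ^^ k) (poly p) = poly ((pderiv ^^ k) p)" for p :: "real poly"
  by (induction k) (simp_all add: deriv_poly)

section \<open>The twisted derivative\<close>

text \<open>Since e^x D (e^(-x) p) = (D - 1) p, the twisted derivative is differentiation against the
  weight e^(-x).\<close>

definition twisted_pderiv :: "real poly \<Rightarrow> real poly" where
  "twisted_pderiv p = pderiv p - p"

lemma twisted_pderiv_add: "twisted_pderiv (p + q) = twisted_pderiv p + twisted_pderiv q"
  by (simp add: twisted_pderiv_def pderiv_add)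

lemma twisted_pderiv_smult: "twisted_pderiv (smult c p) = smult c (twisted_pderiv p)"
  by (simp add: twisted_pderiv_def pderiv_smult smult_diff_right)

lemma higher_twisted_pderiv_pCons_zero:
  "(twisted_pderiv ^^ Suc k) (pCons 0 p)
     = pCons 0 ((twisted_pderiv ^^ Suc k) p) + smult (real (Suc k)) ((twisted_pderiv ^^ k) p)"
  by (rule funpow_pCons_zero)
     (simp_all add: twisted_pderiv_def pderiv_pCons_zero pderiv_add pderiv_smult smult_diff_right)

lemma higher_twisted_pderiv_pderiv:
  "(twisted_pderiv ^^ k) (pderiv p) = pderiv ((twisted_pderiv ^^ k) p)"
  by (induction k) (simp_all add: twisted_pderiv_def pderiv_diff)

lemma deriv_exp_minus_poly:
  "deriv (\<lambda>t. exp (- t) * poly p t) = (\<lambda>t. exp (- t) * poly (twisted_pderiv p) t)"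
proof (rule ext, rule DERIV_imp_deriv)
  fix t :: real
  have "((\<lambda>t. exp (- t) * poly p t) has_real_derivative
      - exp (- t) * poly p t + exp (- t) * poly (pderiv p) t) (at t)"
    by (auto intro!: derivative_eq_intros)
  then show "((\<lambda>t. exp (- t) * poly p t) has_real_derivative exp (- t) * poly (twisted_pderiv p) t) (at t)"
    by (simp add: twisted_pderiv_def algebra_simps)
qed

lemma higher_deriv_exp_minus_poly:
  "(deriv ^^ k) (\<lambda>t. exp (- t) * poly p t) = (\<lambda>t. exp (- t) * poly ((twisted_pderiv ^^ k) p) t)"
  by (induction k) (simp_all add: deriv_exp_minus_poly)

section \<open>Laguerre polynomials\<close>

definition laguerre_coeff :: "nat \<Rightarrow> real \<Rightarrow> nat \<Rightarrow> real" where
  "laguerre_coeff n g k =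
     (if k \<le> n then (-1) ^ k / fact k * ((g + real n) gchoose (n - k)) else 0)"

definition laguerre_poly :: "nat \<Rightarrow> real \<Rightarrow> real poly" where
  "laguerre_poly n g = (\<Sum>k\<le>n. monom (laguerre_coeff n g k) k)"

lemma coeff_laguerre_poly [simp]: "coeff (laguerre_poly n g) k = laguerre_coeff n g k"
  by (simp add: laguerre_poly_def coeff_sum laguerre_coeff_def)

lemma laguerre_poly_0 [simp]: "laguerre_poly 0 g = 1"
  by (rule poly_eqI) (simp add: laguerre_coeff_def coeff_1)

lemma laguerre_coeff_le:
  "k \<le> n \<Longrightarrow> laguerre_coeff n g k = (-1) ^ k / fact k * ((g + real n) gchoose (n - k))"
  by (simp add: laguerre_coeff_def)

lemma pderiv_laguerre_poly: "pderiv (laguerre_poly (Suc n) g) = - laguerre_poly n (g + 1)"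
proof (rule poly_eqI)
  fix k
  have "k \<le> n \<Longrightarrow> real (Suc k) * laguerre_coeff (Suc n) g (Suc k) = - laguerre_coeff n (g + 1) k"
    by (simp only: laguerre_coeff_le Suc_le_mono of_nat_Suc mult.assoc[symmetric]
        Suc_mult_sign_divide_fact diff_Suc_Suc)
       (simp add: add_ac)
  then show "coeff (pderiv (laguerre_poly (Suc n) g)) k = coeff (- laguerre_poly n (g + 1)) k"
    by (cases "k \<le> n") (simp_all add: coeff_pderiv laguerre_coeff_def)
qed

lemma laguerre_poly_Suc_param:
  "laguerre_poly (Suc n) (g + 1) = laguerre_poly (Suc n) g + laguerre_poly n (g + 1)"
proof (rule poly_eqI)
  fix k
  show "coeff (laguerre_poly (Suc n) (g + 1)) k = coeff (laguerre_poly (Suc n) g + laguerre_poly n (g + 1)) k"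
  proof (cases "k \<le> n")
    case True
    define a where "a = g + real (Suc n)"
    have "laguerre_coeff (Suc n) (g + 1) k = (-1) ^ k / fact k * ((a + 1) gchoose Suc (n - k))"
      "laguerre_coeff (Suc n) g k = (-1) ^ k / fact k * (a gchoose Suc (n - k))"
      "laguerre_coeff n (g + 1) k = (-1) ^ k / fact k * (a gchoose (n - k))"
      using True by (simp_all add: laguerre_coeff_le a_def Suc_diff_le add_ac)
    then show ?thesis by (simp add: gbinomial_Suc_Suc distrib_left)
  qed (simp add: laguerre_coeff_def)
qed

lemma laguerre_poly_lower_param:
  "smult (g + 1) (laguerre_poly n (g + 1)) + pCons 0 (pderiv (laguerre_poly n (g + 1)))
     = smult (real n + g + 1) (laguerre_poly n g)"
proof (rule poly_eqI)
  fix k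
  have x_pderiv: "coeff (pCons 0 (pderiv p)) k = real k * coeff p k" for p :: "real poly"
    by (cases k) (simp_all add: coeff_pderiv)
  have "(g + 1 + real k) * laguerre_coeff n (g + 1) k = (real n + g + 1) * laguerre_coeff n g k"
  proof (cases "k \<le> n")
    case True
    define a where "a = g + 1 + real n"
    have "laguerre_coeff n (g + 1) k = (-1) ^ k / fact k * (a gchoose (n - k))"
      "laguerre_coeff n g k = (-1) ^ k / fact k * ((a - 1) gchoose (n - k))"
      using True by (simp_all add: laguerre_coeff_le a_def add_ac)
    moreover have "g + 1 + real k = a - real (n - k)" "real n + g + 1 = a"
      using True by (simp_all add: a_def of_nat_diff)
    ultimately show ?thesis
      using gbinomial_absorb_comp[of a "n - k"] by (simp add: mult.left_commute)
  qed (simp add: laguerre_coeff_def)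
  then show "coeff (smult (g + 1) (laguerre_poly n (g + 1)) + pCons 0 (pderiv (laguerre_poly n (g + 1)))) k
      = coeff (smult (real n + g + 1) (laguerre_poly n g)) k"
    by (simp add: x_pderiv algebra_simps)
qed

lemma laguerre_poly_times_x:
  "pCons 0 (laguerre_poly n (g + 1))
     = smult (real n + g + 1) (laguerre_poly n g) - smult (real n + 1) (laguerre_poly (Suc n) g)"
proof (rule poly_eqI)
  fix k
  define a where "a = g + real n + 1"
  have absorb: "a * ((a - 1) gchoose m) = real (Suc m) * (a gchoose Suc m)" for m
    by (rule gbinomial_absorption[symmetric])
  show "coeff (pCons 0 (laguerre_poly n (g + 1))) k
      = coeff (smult (real n + g + 1) (laguerre_poly n g) - smult (real n + 1) (laguerre_poly (Suc n) g)) k"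
  proof (cases k)
    case 0
    have "laguerre_coeff n g 0 = (a - 1) gchoose n" "laguerre_coeff (Suc n) g 0 = a gchoose Suc n"
      by (simp_all add: laguerre_coeff_le a_def add_ac)
    then show ?thesis using 0 absorb[of n] by (simp add: a_def algebra_simps)
  next
    case (Suc i)
    show ?thesis
    proof (cases "i < n")
      case True
      then obtain m where m: "n = Suc (i + m)" using less_iff_Suc_add by auto
      define c :: real where "c = (-1) ^ i / fact (Suc i)"
      have "laguerre_coeff n (g + 1) i = c * real (Suc i) * (a gchoose Suc m)"
        "laguerre_coeff n g (Suc i) = - c * ((a - 1) gchoose m)"
        "laguerre_coeff (Suc n) g (Suc i) = - c * (a gchoose Suc m)"
        using m by (simp_all add: laguerre_coeff_le a_def c_def add_ac Suc_diff_le)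
      then show ?thesis using Suc absorb[of m] m by (simp add: a_def algebra_simps)
    next
      case False
      then consider "i = n" | "n < i" by linarith
      then show ?thesis
      proof cases
        case 1
        then show ?thesis using Suc Suc_mult_sign_divide_fact[of n]
          by (simp add: laguerre_coeff_def del: power_Suc fact_Suc)
      qed (use Suc in \<open>simp add: laguerre_coeff_def\<close>)
    qed
  qed
qed

lemma laguerre_eq_poly:
  assumes "-1 < g"
  shows "laguerre n g x = poly (laguerre_poly n g) x"
proof -
  have term_eq: "pochhammer (g + 1) n / fact n * (pochhammer (- real n) k / (pochhammer (g + 1) k * fact k))
      = laguerre_coeff n g k" if "k \<le> n" for k
  proof -
    define P where "P = pochhammer (g + 1 + real k) (n - k)"
    have "pochhammer (g + 1) k \<noteq> 0"
      using assms by (simp add: pochhammer_eq_0_iff)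
    moreover have "pochhammer (g + 1) n = pochhammer (g + 1) k * P"
      unfolding P_def using that by (rule pochhammer_product)
    ultimately have "pochhammer (g + 1) n / fact n * (pochhammer (- real n) k / (pochhammer (g + 1) k * fact k))
        = P / fact n * (pochhammer (- real n) k / fact k)"
      by simp
    also have "pochhammer (- real n) k / fact k = (-1) ^ k * (real n gchoose k)"
      by (simp add: gbinomial_pochhammer power_mult_distrib[symmetric])
    also have "real n gchoose k = fact n / (fact k * fact (n - k))"
      using that by (simp add: binomial_gbinomial[symmetric] binomial_fact)
    also have "P / fact n * ((-1) ^ k * (fact n / (fact k * fact (n - k)))) = (-1) ^ k / fact k * (P / fact (n - k))"
      by simp
    also have "P / fact (n - k) = (g + real n) gchoose (n - k)"
      unfolding P_def using that by (simp add: gbinomial_pochhammer' of_nat_diff add_ac)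
    finally show ?thesis
      using that by (simp add: laguerre_coeff_le)
  qed
  have "laguerre n g x = (\<Sum>k\<le>n. laguerre_coeff n g k * x ^ k)"
    unfolding laguerre_def sum_distrib_left atLeast0AtMost
    by (rule sum.cong) (simp_all add: term_eq[symmetric] mult.assoc)
  also have "\<dots> = poly (laguerre_poly n g) x"
    by (simp add: laguerre_poly_def poly_sum poly_monom)
  finally show ?thesis .
qed

lemma twisted_pderiv_laguerre_poly: "twisted_pderiv (laguerre_poly n g) = - laguerre_poly n (g + 1)"
  by (cases n) (simp_all add: twisted_pderiv_def pderiv_laguerre_poly laguerre_poly_Suc_param)

lemma higher_twisted_pderiv_laguerre_poly:
  "(twisted_pderiv ^^ k) (laguerre_poly n g) = smult ((-1) ^ k) (laguerre_poly n (g + real k))"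
  by (induction k) (simp_all add: twisted_pderiv_smult twisted_pderiv_laguerre_poly add_ac)

lemma higher_pderiv_monom_mult_laguerre_poly:
  "(pderiv ^^ m) (monom 1 m * laguerre_poly n (real m)) = smult (pochhammer (real n + 1) m) (laguerre_poly n 0)"
proof (induction m)
  case (Suc m)
  have "pderiv (monom 1 (Suc m) * laguerre_poly n (real m + 1))
      = smult (real n + real m + 1) (monom 1 m * laguerre_poly n (real m))"
    by (simp add: pderiv_monom_Suc_mult laguerre_poly_lower_param)
  then have "(pderiv ^^ Suc m) (monom 1 (Suc m) * laguerre_poly n (real (Suc m)))
      = smult (real n + real m + 1) ((pderiv ^^ m) (monom 1 m * laguerre_poly n (real m)))"
    by (simp only: funpow_Suc_right o_apply of_nat_Suc add.commute higher_pderiv_smult)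
  then show ?case
    by (simp add: Suc pochhammer_Suc algebra_simps)
qed simp

section \<open>The two differential operators\<close>

definition laguerre_op :: "real \<Rightarrow> real poly \<Rightarrow> real poly" where
  "laguerre_op a p = pCons 0 (pderiv (pderiv p)) + [:a + 1, -1:] * pderiv p"

lemma poly_laguerre_op:
  "poly (laguerre_op a p) x = x * poly (pderiv (pderiv p)) x + (a + 1 - x) * poly (pderiv p) x"
  by (simp add: laguerre_op_def algebra_simps)

lemma laguerre_op_add: "laguerre_op a (p + q) = laguerre_op a p + laguerre_op a q"
  by (simp add: poly_eq_poly_eq_iff[symmetric] fun_eq_iff poly_laguerre_op pderiv_add algebra_simps)

lemma laguerre_op_smult: "laguerre_op a (smult c p) = smult c (laguerre_op a p)"
  by (simp add: poly_eq_poly_eq_iff[symmetric] fun_eq_iff poly_laguerre_op pderiv_smult algebra_simps)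

lemma laguerre_op_pCons_zero:
  "laguerre_op a (pCons 0 p) = pCons 0 (laguerre_op (a + 2) p - p) + smult (a + 1) p"
  by (simp add: poly_eq_poly_eq_iff[symmetric] fun_eq_iff poly_laguerre_op pderiv_pCons pderiv_add algebra_simps)

lemma laguerre_poly_ode: "laguerre_op g (laguerre_poly n g) + smult (real n) (laguerre_poly n g) = 0"
proof (cases n)
  case (Suc j)
  define u where "u = laguerre_poly j (g + 1)"
  have deriv: "pderiv (laguerre_poly (Suc j) g) = - u"
    by (simp add: Suc u_def pderiv_laguerre_poly)
  have lower: "(g + 1) * poly u x + x * poly (pderiv u) x = (real j + g + 1) * poly (laguerre_poly j g) x" for x
    using arg_cong[OF laguerre_poly_lower_param[of g j], of "\<lambda>p. poly p x"] by (simp add: u_def)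
  have times_x: "x * poly u x
      = (real j + g + 1) * poly (laguerre_poly j g) x - (real j + 1) * poly (laguerre_poly n g) x" for x
    using arg_cong[OF laguerre_poly_times_x[of j g], of "\<lambda>p. poly p x"] by (simp add: u_def Suc)
  have "poly (laguerre_op g (laguerre_poly n g) + smult (real n) (laguerre_poly n g)) x = 0" for x
    using lower[of x] times_x[of x] unfolding Suc
    by (simp add: poly_laguerre_op deriv pderiv_minus algebra_simps)
  then show ?thesis
    by (simp add: poly_eq_poly_eq_iff[symmetric] fun_eq_iff)
qed (simp add: laguerre_op_def)

definition higher_laguerre_op :: "nat \<Rightarrow> real poly \<Rightarrow> real poly" where
  "higher_laguerre_op \<alpha> p = smult ((-1) ^ (\<alpha> + 1))
     (pCons 0 ((twisted_pderiv ^^ (\<alpha> + 2)) ((pderiv ^^ (\<alpha> + 2)) (monom 1 (\<alpha> + 1) * p))))"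

lemma L2op_poly: "L2op \<alpha> (poly p) x = poly (laguerre_op (real \<alpha>) p) x"
  by (simp add: L2op_def poly_laguerre_op higher_deriv_poly deriv_poly numeral_2_eq_2)

lemma L2a4op_poly: "L2a4op \<alpha> (poly p) x = poly (higher_laguerre_op \<alpha> p) x"
proof -
  have "(\<lambda>s. s ^ (\<alpha> + 1) * poly p s) = poly (monom 1 (\<alpha> + 1) * p)"
    by (simp add: fun_eq_iff poly_monom)
  then have "L2a4op \<alpha> (poly p) x = (-1) ^ (\<alpha> + 1) * exp x * x * (exp (- x) *
      poly ((twisted_pderiv ^^ (\<alpha> + 2)) ((pderiv ^^ (\<alpha> + 2)) (monom 1 (\<alpha> + 1) * p))) x)"
    by (simp only: L2a4op_def higher_deriv_poly higher_deriv_exp_minus_poly)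
  then show ?thesis
    by (simp add: higher_laguerre_op_def exp_minus)
qed

lemma higher_laguerre_op_add:
  "higher_laguerre_op \<alpha> (p + q) = higher_laguerre_op \<alpha> p + higher_laguerre_op \<alpha> q"
  by (simp only: higher_laguerre_op_def distrib_left higher_pderiv_add
      funpow_additive[OF twisted_pderiv_add])
     (simp add: smult_add_right)

lemma higher_laguerre_op_smult:
  "higher_laguerre_op \<alpha> (smult c p) = smult c (higher_laguerre_op \<alpha> p)"
  by (simp only: higher_laguerre_op_def mult_smult_right higher_pderiv_smult
      funpow_smult[OF twisted_pderiv_smult])
     (simp add: mult.commute)

lemma laguerre_op_x_laguerre_poly:
  "laguerre_op a (pCons 0 (laguerre_poly j (a + 2))) + smult (real j + 1) (pCons 0 (laguerre_poly j (a + 2)))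
     = smult (a + 1) (laguerre_poly j (a + 2))"
proof -
  have "laguerre_op (a + 2) (laguerre_poly j (a + 2)) = - smult (real j) (laguerre_poly j (a + 2))"
    using laguerre_poly_ode[of "a + 2" j] by (simp add: eq_neg_iff_add_eq_0)
  then show ?thesis
    by (simp add: laguerre_op_pCons_zero poly_eq_poly_eq_iff[symmetric] fun_eq_iff algebra_simps)
qed

lemma higher_laguerre_op_x_laguerre_poly:
  "higher_laguerre_op \<alpha> (pCons 0 (laguerre_poly j (real \<alpha> + 2)))
     = smult (- pochhammer (real j + 1) (\<alpha> + 2)) (pCons 0 (laguerre_poly j (real \<alpha> + 2)))"
proof -
  have "monom 1 (\<alpha> + 1) * pCons 0 (laguerre_poly j (real \<alpha> + 2))
      = monom 1 (\<alpha> + 2) * laguerre_poly j (real (\<alpha> + 2))"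
    by (simp add: poly_eq_poly_eq_iff[symmetric] fun_eq_iff poly_monom add_ac)
  then have D: "(pderiv ^^ (\<alpha> + 2)) (monom 1 (\<alpha> + 1) * pCons 0 (laguerre_poly j (real \<alpha> + 2)))
      = smult (pochhammer (real j + 1) (\<alpha> + 2)) (laguerre_poly j 0)"
    by (simp only: higher_pderiv_monom_mult_laguerre_poly)
  have E: "(twisted_pderiv ^^ (\<alpha> + 2)) (laguerre_poly j 0) = smult ((-1) ^ \<alpha>) (laguerre_poly j (real \<alpha> + 2))"
    by (simp only: higher_twisted_pderiv_laguerre_poly) (simp add: add_ac)
  have "(-1) ^ \<alpha> * (-1) ^ \<alpha> = (1::real)"
    by (simp flip: power_mult_distrib)
  then show ?thesis
    unfolding higher_laguerre_op_def D funpow_smult[OF twisted_pderiv_smult] E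
    by (simp add: mult_ac)
qed

lemma higher_laguerre_op_laguerre_poly_expand:
  "higher_laguerre_op \<alpha> (laguerre_poly n (real \<alpha>)) = smult (pochhammer (real n + 1) \<alpha>)
     (smult (real \<alpha> + 2)
        (pCons 0 (pderiv (pderiv (laguerre_poly n (real \<alpha> + 1))) - pderiv (laguerre_poly n (real \<alpha> + 2))))
      - pCons 0 (pCons 0 (pderiv (pderiv (laguerre_poly n (real \<alpha> + 2))))))"
proof -
  define c where "c = pochhammer (real n + 1) \<alpha>"
  define f where "f = monom 1 \<alpha> * laguerre_poly n (real \<alpha>)"
  define u where "u = laguerre_poly n 0"
  have M: "monom 1 (\<alpha> + 1) * laguerre_poly n (real \<alpha>) = pCons 0 f"
    by (simp add: f_def monom_Suc mult_pCons_left)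
  have Df: "(pderiv ^^ \<alpha>) f = smult c u"
    unfolding f_def c_def u_def by (rule higher_pderiv_monom_mult_laguerre_poly)
  have D: "(pderiv ^^ (\<alpha> + 2)) (pCons 0 f)
      = smult c (pCons 0 (pderiv (pderiv u)) + smult (real \<alpha> + 2) (pderiv u))"
    using higher_pderiv_pCons_zero[of "Suc \<alpha>" f]
    by (simp add: Df pderiv_smult) (simp add: poly_eq_poly_eq_iff[symmetric] fun_eq_iff algebra_simps)
  have E: "(twisted_pderiv ^^ k) u = smult ((-1) ^ k) (laguerre_poly n (real k))" for k
    unfolding u_def by (simp add: higher_twisted_pderiv_laguerre_poly)
  have ED: "(twisted_pderiv ^^ (\<alpha> + 2)) (pCons 0 (pderiv (pderiv u)) + smult (real \<alpha> + 2) (pderiv u))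
      = pCons 0 ((twisted_pderiv ^^ (\<alpha> + 2)) (pderiv (pderiv u)))
        + smult (real \<alpha> + 2)
            ((twisted_pderiv ^^ (\<alpha> + 1)) (pderiv (pderiv u)) + (twisted_pderiv ^^ (\<alpha> + 2)) (pderiv u))"
    using higher_twisted_pderiv_pCons_zero[of "Suc \<alpha>" "pderiv (pderiv u)"]
    by (simp add: funpow_additive[OF twisted_pderiv_add] funpow_smult[OF twisted_pderiv_smult]
        smult_add_right add_ac del: funpow.simps)
  have sign: "(-1) ^ \<alpha> * ((-1) ^ \<alpha> * y) = (y::real)" for y
    by (simp flip: mult.assoc power_mult_distrib)
  show ?thesis
    unfolding higher_laguerre_op_def M D funpow_smult[OF twisted_pderiv_smult] ED higher_twisted_pderiv_pderiv E
      c_def[symmetric]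
    by (simp add: pderiv_smult pderiv_minus sign poly_eq_poly_eq_iff[symmetric] fun_eq_iff algebra_simps)
qed

lemma higher_laguerre_op_laguerre_poly:
  "higher_laguerre_op \<alpha> (laguerre_poly (Suc j) (real \<alpha>))
     + smult (pochhammer (real (Suc j)) (\<alpha> + 2)) (laguerre_poly (Suc j) (real \<alpha>))
   = smult ((real \<alpha> + 1) * (real \<alpha> + 2) * pochhammer (real j + 2) \<alpha>) (laguerre_poly j (real \<alpha> + 2))"
proof -
  define a where "a = real \<alpha>"
  define n where "n = real j + 1"
  define c where "c = pochhammer (real j + 2) \<alpha>"
  have pochhammer_eq: "pochhammer (real (Suc j)) (\<alpha> + 2) = n * c * (n + a + 1)"
    using pochhammer_add_2[of "real j + 1" \<alpha>] by (simp add: n_def c_def a_def add_ac)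
  have "poly (higher_laguerre_op \<alpha> (laguerre_poly (Suc j) a)) x
        + n * c * (n + a + 1) * poly (laguerre_poly (Suc j) a) x
      = (a + 1) * (a + 2) * c * poly (laguerre_poly j (a + 2)) x" for x
  proof -
    define A1 A2 A3 where "A1 = poly (laguerre_poly j (a + 1)) x"
      and "A2 = poly (laguerre_poly j (a + 2)) x" and "A3 = poly (laguerre_poly j (a + 3)) x"
    define B0 B1 B2 where "B0 = poly (laguerre_poly (Suc j) a) x"
      and "B1 = poly (laguerre_poly (Suc j) (a + 1)) x" and "B2 = poly (laguerre_poly (Suc j) (a + 2)) x"
    define C1 C2 where "C1 = poly (pderiv (pderiv (laguerre_poly (Suc j) (a + 1)))) x"
      and "C2 = poly (pderiv (pderiv (laguerre_poly (Suc j) (a + 2)))) x"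
    have ode: "x * C1 - (a + 2 - x) * A2 + n * B1 = 0" "x * C2 - (a + 3 - x) * A3 + n * B2 = 0"
      using arg_cong[OF laguerre_poly_ode[of "a + 1" "Suc j"], of "\<lambda>p. poly p x"]
        arg_cong[OF laguerre_poly_ode[of "a + 2" "Suc j"], of "\<lambda>p. poly p x"]
      by (simp_all add: poly_laguerre_op pderiv_laguerre_poly A2_def A3_def B1_def B2_def C1_def C2_def n_def
          algebra_simps)
    have times_x: "x * A3 = (real j + a + 3) * A2 - n * B2" "x * A2 = (real j + a + 2) * A1 - n * B1"
      using arg_cong[OF laguerre_poly_times_x[of j "a + 2"], of "\<lambda>p. poly p x"]
        arg_cong[OF laguerre_poly_times_x[of j "a + 1"], of "\<lambda>p. poly p x"]
      by (simp_all add: A1_def A2_def A3_def B1_def B2_def n_def algebra_simps)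
    have shift: "B2 = B1 + A2" "B1 = B0 + A1"
      using arg_cong[OF laguerre_poly_Suc_param[of j "a + 1"], of "\<lambda>p. poly p x"]
        arg_cong[OF laguerre_poly_Suc_param[of j a], of "\<lambda>p. poly p x"]
      by (simp_all add: A1_def A2_def B0_def B1_def B2_def add_ac)
    have "poly (higher_laguerre_op \<alpha> (laguerre_poly (Suc j) a)) x
        = c * ((a + 2) * (x * C1 + x * A3) - x * x * C2)"
      unfolding a_def higher_laguerre_op_laguerre_poly_expand
      by (simp add: C1_def C2_def A3_def c_def a_def pderiv_laguerre_poly add_ac algebra_simps)
    then have "poly (higher_laguerre_op \<alpha> (laguerre_poly (Suc j) a)) x + n * c * (n + a + 1) * B0
        = c * ((a + 2) * (x * C1 + x * A3) - x * x * C2 + n * (n + a + 1) * B0)"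
      by (simp add: algebra_simps)
    also have "(a + 2) * (x * C1 + x * A3) - x * x * C2 + n * (n + a + 1) * B0 = (a + 1) * (a + 2) * A2"
      using ode times_x shift unfolding n_def by algebra
    finally show ?thesis
      by (simp add: A2_def B0_def ac_simps)
  qed
  then show ?thesis
    unfolding pochhammer_eq c_def[symmetric] by (simp add: poly_eq_poly_eq_iff[symmetric] fun_eq_iff a_def)
qed

section \<open>Laguerre-type polynomials\<close>

definition T_poly :: "nat \<Rightarrow> nat \<Rightarrow> real poly" where
  "T_poly n \<alpha> = (if n = 0 then 0 else smult (- t_coef n \<alpha>) (pCons 0 (laguerre_poly (n - 1) (real \<alpha> + 2))))"

lemma laguerre_type_eq_poly: "laguerre_type n \<alpha> N = poly (laguerre_poly n (real \<alpha>) + smult N (T_poly n \<alpha>))"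
  by (simp add: fun_eq_iff laguerre_type_def T_lag_def T_poly_def laguerre_eq_poly)

lemma higher_laguerre_op_T_poly:
  "higher_laguerre_op \<alpha> (T_poly n \<alpha>) + smult (pochhammer (real n) (\<alpha> + 2)) (T_poly n \<alpha>) = 0"
proof (cases n)
  case 0
  have "higher_laguerre_op \<alpha> 0 = 0"
    using higher_laguerre_op_smult[of \<alpha> 0 0] by simp
  then show ?thesis using 0 by (simp add: T_poly_def)
next
  case (Suc j)
  then have T: "T_poly n \<alpha> = smult (- t_coef n \<alpha>) (pCons 0 (laguerre_poly j (real \<alpha> + 2)))"
    by (simp add: T_poly_def)
  show ?thesis
    unfolding T higher_laguerre_op_smult higher_laguerre_op_x_laguerre_poly
    by (simp add: Suc add.commute mult.commute)
qed

lemma t_coef_Suc_mult_fact: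
  "t_coef (Suc j) \<alpha> * fact (\<alpha> + 2) = (real \<alpha> + 2) * pochhammer (real j + 2) \<alpha>"
proof -
  have "of_nat (\<alpha> + 1) + 1 = real \<alpha> + 2" "of_nat (Suc j) + 1 = real j + 2" "\<alpha> + 1 + j = Suc j + \<alpha>"
    by simp_all
  then have "fact (\<alpha> + 1) * pochhammer (real \<alpha> + 2) j = fact (Suc j) * (pochhammer (real j + 2) \<alpha> :: real)"
    using fact_add_eq_pochhammer[of "\<alpha> + 1" j] fact_add_eq_pochhammer[of "Suc j" \<alpha>] by metis
  then have fact_ratio:
    "fact (\<alpha> + 1) * pochhammer (real \<alpha> + 2) j / fact (Suc j) = (pochhammer (real j + 2) \<alpha> :: real)"
    by simp
  have "(fact (\<alpha> + 2) :: real) = (real \<alpha> + 2) * fact (\<alpha> + 1)"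
    by (simp add: numeral_2_eq_2 add_ac)
  then have "t_coef (Suc j) \<alpha> * fact (\<alpha> + 2)
      = (real \<alpha> + 2) * (fact (\<alpha> + 1) * pochhammer (real \<alpha> + 2) j / fact (Suc j))"
    by (simp add: t_coef_def)
  then show ?thesis
    by (simp only: fact_ratio)
qed

lemma laguerre_type_cross_identity:
  "smult (fact (\<alpha> + 2)) (laguerre_op (real \<alpha>) (T_poly n \<alpha>) + smult (real n) (T_poly n \<alpha>))
     + higher_laguerre_op \<alpha> (laguerre_poly n (real \<alpha>))
     + smult (pochhammer (real n) (\<alpha> + 2)) (laguerre_poly n (real \<alpha>)) = 0"
proof (cases n)
  case 0
  have "(pderiv ^^ (\<alpha> + 2)) (monom 1 (\<alpha> + 1)) = (0 :: real poly)"
    by (rule poly_eqI) (simp only: coeff_higher_pderiv coeff_monom, simp)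
  moreover have "(twisted_pderiv ^^ k) 0 = 0" for k
    by (induction k) (simp_all add: twisted_pderiv_def)
  ultimately have "higher_laguerre_op \<alpha> 1 = 0"
    by (simp only: higher_laguerre_op_def mult_1_right) simp
  then show ?thesis
    using 0 by (simp add: T_poly_def laguerre_op_def pochhammer_rec)
next
  case (Suc j)
  define X where "X = pCons 0 (laguerre_poly j (real \<alpha> + 2))"
  have T: "T_poly n \<alpha> = smult (- t_coef n \<alpha>) X"
    by (simp add: Suc T_poly_def X_def)
  have "laguerre_op (real \<alpha>) (T_poly n \<alpha>) + smult (real n) (T_poly n \<alpha>)
      = smult (- t_coef n \<alpha>) (laguerre_op (real \<alpha>) X + smult (real j + 1) X)"
    unfolding T laguerre_op_smult by (simp add: Suc smult_add_right add.commute mult.commute)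
  also have "\<dots> = smult (- t_coef (Suc j) \<alpha> * (real \<alpha> + 1)) (laguerre_poly j (real \<alpha> + 2))"
    unfolding X_def laguerre_op_x_laguerre_poly by (simp add: Suc)
  finally have lagT: "laguerre_op (real \<alpha>) (T_poly n \<alpha>) + smult (real n) (T_poly n \<alpha>)
      = smult (- t_coef (Suc j) \<alpha> * (real \<alpha> + 1)) (laguerre_poly j (real \<alpha> + 2))" .
  have scalar: "fact (\<alpha> + 2) * (- t_coef (Suc j) \<alpha> * (real \<alpha> + 1))
      = - ((real \<alpha> + 1) * (real \<alpha> + 2) * pochhammer (real j + 2) \<alpha>)"
    using t_coef_Suc_mult_fact[of j \<alpha>] by (simp add: algebra_simps del: fact_Suc)
  have "smult (fact (\<alpha> + 2)) (laguerre_op (real \<alpha>) (T_poly n \<alpha>) + smult (real n) (T_poly n \<alpha>))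
      = - smult ((real \<alpha> + 1) * (real \<alpha> + 2) * pochhammer (real j + 2) \<alpha>) (laguerre_poly j (real \<alpha> + 2))"
    unfolding lagT smult_smult scalar by simp
  then show ?thesis
    using higher_laguerre_op_laguerre_poly[of \<alpha> j] by (simp add: Suc add.assoc)
qed

theorem theorem2p1:
  fixes \<alpha> n :: nat and N x :: real
  assumes "N > 0" and "0 \<le> x"
  shows "(L2op \<alpha> (laguerre_type n \<alpha> N) x + real n * laguerre_type n \<alpha> N x)
         + N / fact (\<alpha> + 2) *
           (L2a4op \<alpha> (laguerre_type n \<alpha> N) x + pochhammer (real n) (\<alpha> + 2) * laguerre_type n \<alpha> N x)
         = 0"
proof -
  define L T where "L = laguerre_poly n (real \<alpha>)" and "T = T_poly n \<alpha>"
  define F p where "F = (fact (\<alpha> + 2) :: real)" and "p = pochhammer (real n) (\<alpha> + 2)"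
  have ode: "poly (laguerre_op (real \<alpha>) L) x + real n * poly L x = 0"
    using arg_cong[OF laguerre_poly_ode[of "real \<alpha>" n], of "\<lambda>q. poly q x"] by (simp add: L_def)
  have higher_T: "poly (higher_laguerre_op \<alpha> T) x + p * poly T x = 0"
    using arg_cong[OF higher_laguerre_op_T_poly[of \<alpha> n], of "\<lambda>q. poly q x"] by (simp add: T_def p_def)
  have cross: "F * (poly (laguerre_op (real \<alpha>) T) x + real n * poly T x)
      + (poly (higher_laguerre_op \<alpha> L) x + p * poly L x) = 0"
    using arg_cong[OF laguerre_type_cross_identity[of \<alpha> n], of "\<lambda>q. poly q x"]
    by (simp add: L_def T_def F_def p_def add.assoc)
  have "F \<noteq> 0"
    by (simp add: F_def)
  \<comment> \<open>The coefficients of N^0, N^1, N^2 vanish by \<open>ode\<close>, \<open>cross\<close> and \<open>higher_T\<close>;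
      the identity is polynomial.\<close>
  then show ?thesis
    unfolding laguerre_type_eq_poly L2op_poly L2a4op_poly laguerre_op_add laguerre_op_smult
      higher_laguerre_op_add higher_laguerre_op_smult L_def[symmetric] T_def[symmetric]
      F_def[symmetric] p_def[symmetric]
    using ode higher_T cross by (simp add: field_simps) algebra
qed

end
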